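(* Let $M_\varphi$ be a hyperbolic once-punctured torus bundle with $H_1(M_\varphi;\mathbb{Z}_2)\cong\mathbb{Z}_2^3$. Then $X_\varphi(S)$ contains either exactly one or all three of the coordinate axes $L_1,L_2,L_3$ of $X(S)=\mathbb{C}^3$. Moreover, $X_{\varphi^2}(S)$ contains all three lines $L_1,L_2,L_3$.
   Context: $S$ is the once-punctured torus fibre with $\pi_1(S)$ free on $a,b$; $X(S)\cong\mathbb{C}^3$ is its $\mathrm{SL}(2,\mathbb{C})$-character variety with coordinates $(x,y,z)=(\operatorname{tr}\rho(a),\operatorname{tr}\rho(b),\operatorname{tr}\rho(ab))$; $L_1,L_2,L_3$ are the $x$-, $y$- and $z$-axes. For a monodromy $\psi$, $X_\psi(S)$ is the fixed set of the polynomial automorphism of $X(S)$ induced by $\psi$ ($\chi\mapsto\chi\circ\psi$). *)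

theory Defs
  imports "HOL-Analysis.Analysis"
begin

text \<open>Free group F_2 = pi_1(S) on generators a, b; words are lists of letters,
  a letter (g, True) stands for the inverse of g.\<close>

datatype gen = Ga | Gb

type_synonym letter = "gen \<times> bool"

definition inv_letter :: "letter \<Rightarrow> letter" where
  "inv_letter l = (fst l, \<not> snd l)"

definition inv_word :: "letter list \<Rightarrow> letter list" where
  "inv_word w = rev (map inv_letter w)"

fun free_red :: "letter list \<Rightarrow> letter list" where
  "free_red [] = []"
| "free_red (x # xs) =
     (case free_red xs of [] \<Rightarrow> [x]
      | y # ys \<Rightarrow> if y = inv_letter x then ys else x # y # ys)"

type_synonym endo = "gen \<Rightarrow> letter list"

fun subst :: "endo \<Rightarrow> letter list \<Rightarrow> letter list" where
  "subst f [] = []"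
| "subst f ((g, False) # w) = f g @ subst f w"
| "subst f ((g, True) # w) = inv_word (f g) @ subst f w"

definition endo_comp :: "endo \<Rightarrow> endo \<Rightarrow> endo" where
  "endo_comp f g = (\<lambda>x. subst f (g x))"

definition is_aut :: "endo \<Rightarrow> bool" where
  "is_aut f \<longleftrightarrow> (\<exists>g. \<forall>x. free_red (subst f (g x)) = [(x, False)]
                         \<and> free_red (subst g (f x)) = [(x, False)])"

text \<open>Action on H_1(S;Z) = Z^2: exponent sums (abelianization matrix).\<close>
definition exp_sum :: "gen \<Rightarrow> letter list \<Rightarrow> int" where
  "exp_sum g w = (\<Sum>l\<leftarrow>w. if fst l = g then (if snd l then -1 else 1) else 0)"

definition ab11 :: "endo \<Rightarrow> int" where "ab11 f = exp_sum Ga (f Ga)"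
definition ab21 :: "endo \<Rightarrow> int" where "ab21 f = exp_sum Gb (f Ga)"
definition ab12 :: "endo \<Rightarrow> int" where "ab12 f = exp_sum Ga (f Gb)"
definition ab22 :: "endo \<Rightarrow> int" where "ab22 f = exp_sum Gb (f Gb)"

definition ab_trace :: "endo \<Rightarrow> int" where "ab_trace f = ab11 f + ab22 f"
definition ab_det :: "endo \<Rightarrow> int" where "ab_det f = ab11 f * ab22 f - ab12 f * ab21 f"

type_synonym mat2 = "complex^2^2"

fun eval_word :: "(gen \<Rightarrow> mat2) \<Rightarrow> letter list \<Rightarrow> mat2" where
  "eval_word \<rho> [] = mat 1"
| "eval_word \<rho> ((g, False) # w) = \<rho> g ** eval_word \<rho> w"
| "eval_word \<rho> ((g, True) # w) = matrix_inv (\<rho> g) ** eval_word \<rho> w"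

definition is_SL2_rep :: "(gen \<Rightarrow> mat2) \<Rightarrow> bool" where
  "is_SL2_rep \<rho> \<longleftrightarrow> (\<forall>g. det (\<rho> g) = 1)"

definition char_coords :: "(gen \<Rightarrow> mat2) \<Rightarrow> complex \<times> complex \<times> complex" where
  "char_coords \<rho> = (trace (eval_word \<rho> [(Ga, False)]),
                    trace (eval_word \<rho> [(Gb, False)]),
                    trace (eval_word \<rho> [(Ga, False), (Gb, False)]))"

definition fixed_chars :: "endo \<Rightarrow> (complex \<times> complex \<times> complex) set" where
  "fixed_chars f = {char_coords \<rho> | \<rho>. is_SL2_rep \<rho> \<and>
      (\<forall>w. trace (eval_word \<rho> (subst f w)) = trace (eval_word \<rho> w))}"

definition axis :: "nat \<Rightarrow> (complex \<times> complex \<times> complex) set" where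
  "axis i = (if i = 1 then {(x, 0, 0) | x. True}
             else if i = 2 then {(0, y, 0) | y. True}
             else {(0, 0, z) | z. True})"

end

(* If the character of rho lies on a coordinate axis, two of rho(a), rho(b), rho(ab) are traceless
   and hence square to -1, so rho factors through the infinite dicyclic group
   <t, q | q t q^-1 = t^-1, q^4 = 1>, with t going to the element whose trace is the free coordinate.
   If phi acts trivially on H_1(S; Z/2), it preserves the kernel of this quotient of F_2 and induces
   t -> (-1)^s t^(+-1) there; the sign s is read off from the character of the dicyclic group onto Z/4,
   i.e. from the off-diagonal entries b, c of the homology matrix of phi mod 4 (for L_3 from b - c,
   using det = 1).  The axis is fixed exactly when s = 0: otherwise the free coordinate changes sign.
   As b, c are 0 or 2 mod 4, exactly one or all three of c <> 2, b <> 2, b = c hold; and phi^2 always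
   induces s = 0. *)

theory Submission
  imports Defs
begin

lemma matrix_inv_eqI:
  fixes A B :: "'a::field^'n^'n"
  assumes "A ** B = mat 1"
  shows "matrix_inv A = B"
proof -
  have "B ** A = mat 1" by (rule matrix_left_right_inverse1[OF assms])
  with assms have "A ** matrix_inv A = mat 1 \<and> matrix_inv A ** A = mat 1"
    unfolding matrix_inv_def
    by (intro someI[where P = "\<lambda>A'. A ** A' = mat 1 \<and> A' ** A = mat 1"]) simp
  then have "B = (matrix_inv A ** A) ** B" by simp
  also have "\<dots> = matrix_inv A" using assms by (metis matrix_mul_assoc matrix_mul_rid)
  finally show ?thesis by simp
qed

lemma matrix_mul_neg_left: "(- A) ** B = - (A ** (B :: 'a::ring_1^'p^'n))"
  by (simp add: matrix_matrix_mult_def vec_eq_iff sum_negf)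

lemma matrix_mul_neg_right: "A ** (- B) = - ((A :: 'a::ring_1^'n^'m) ** B)"
  by (simp add: matrix_matrix_mult_def vec_eq_iff sum_negf)

lemma trace_neg: "trace (- A) = - trace (A :: 'a::ring_1^'n^'n)"
  by (simp add: trace_def sum_negf)

lemma mat2_eq_iff:
  "(A :: 'a^2^2) = B \<longleftrightarrow> A$1$1 = B$1$1 \<and> A$1$2 = B$1$2 \<and> A$2$1 = B$2$1 \<and> A$2$2 = B$2$2"
  by (auto simp: vec_eq_iff forall_2)

lemma mat2_mult_nth: "((A :: 'a::semiring_1^2^2) ** B)$i$j = A$i$1 * B$1$j + A$i$2 * B$2$j"
  by (simp add: matrix_matrix_mult_def sum_2)

lemma trace_mat2: "trace (A :: 'a::semiring_1^2^2) = A$1$1 + A$2$2"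
  by (simp add: trace_def sum_2)

lemma mat2_square_eq_neg_one_iff:
  fixes M :: "'a::idom^2^2"
  assumes "det M = 1"
  shows "M ** M = - mat 1 \<longleftrightarrow> trace M = 0"
proof
  assume "M ** M = - mat 1"
  then have "M$1$1 * M$1$1 + M$1$2 * M$2$1 = -1" "M$2$1 * M$1$2 + M$2$2 * M$2$2 = -1"
    unfolding mat2_eq_iff mat2_mult_nth by (simp_all add: mat_def)
  then have "(M$1$1 + M$2$2) ^ 2 = 0"
    using assms unfolding det_2 by algebra
  then show "trace M = 0" by (simp add: trace_mat2)
next
  assume "trace M = 0"
  then have d: "M$2$2 = - M$1$1" by (simp add: trace_mat2 add_eq_0_iff)
  have e: "M$1$2 * M$2$1 = - 1 - M$1$1 * M$1$1" using assms d unfolding det_2 by algebra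
  show "M ** M = - mat 1"
    unfolding mat2_eq_iff mat2_mult_nth by (simp add: mat_def d e mult.commute[of "M$2$1"] algebra_simps)
qed

fun matpow :: "'a::semiring_1^'n^'n \<Rightarrow> nat \<Rightarrow> 'a^'n^'n" where
  "matpow A 0 = mat 1"
| "matpow A (Suc k) = A ** matpow A k"

lemma matpow_Suc_right: "matpow A (Suc k) = matpow A k ** A"
  by (induction k) (simp_all add: matrix_mul_assoc)

lemma matpow_commute:
  assumes "C ** A = B ** C"
  shows "C ** matpow A k = matpow B k ** C"
proof (induction k)
  case (Suc k)
  have "C ** matpow A (Suc k) = (B ** C) ** matpow A k"
    by (simp add: assms matrix_mul_assoc)
  also have "\<dots> = matpow B (Suc k) ** C"
    by (simp add: Suc matrix_mul_assoc[symmetric])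
  finally show ?case .
qed simp

lemma det_matpow: "det (matpow A k) = det A ^ k"
  by (induction k) (simp_all add: det_mul)

text \<open>\<open>(s, n, e)\<close> stands for \<open>(-1)\<^sup>s t\<^sup>n q\<^sup>e\<close> in the infinite dicyclic group
  \<open>\<langle>t, q | q t q\<^sup>-\<^sup>1 = t\<^sup>-\<^sup>1, q\<^sup>4 = 1\<rangle>\<close>, where \<open>-1\<close> denotes the central element \<open>q\<^sup>2\<close>.\<close>
type_synonym dic = "bool \<times> int \<times> bool"

fun dic_mult :: "dic \<Rightarrow> dic \<Rightarrow> dic" where
  "dic_mult (s, m, e) (s', k, f) = (s \<noteq> (s' \<noteq> (e \<and> f)), m + (if e then - k else k), e \<noteq> f)"

fun dic_inv :: "dic \<Rightarrow> dic" where
  "dic_inv (s, m, e) = (if e then (\<not> s, m, True) else (s, - m, False))"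

definition dic_one :: dic where "dic_one = (False, 0, False)"

definition dic_t :: dic where "dic_t = (False, 1, False)"

definition dic_q :: dic where "dic_q = (False, 0, True)"

lemma dic_mult_one [simp]: "dic_mult dic_one x = x" "dic_mult x dic_one = x"
  by (cases x; simp add: dic_one_def)+

lemma dic_mult_assoc: "dic_mult (dic_mult x y) z = dic_mult x (dic_mult y z)"
  by (cases x; cases y; cases z) auto

lemma dic_mult_inv [simp]: "dic_mult x (dic_inv x) = dic_one" "dic_mult (dic_inv x) x = dic_one"
  by (cases x; simp add: dic_one_def)+

lemma dic_inv_inv [simp]: "dic_inv (dic_inv x) = x"
  by (cases x) simp

lemma dic_inv_one [simp]: "dic_inv dic_one = dic_one"
  by (simp add: dic_one_def)

lemma dic_inv_mult: "dic_inv (dic_mult x y) = dic_mult (dic_inv y) (dic_inv x)"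
  by (cases x; cases y) auto

definition dic_letter :: "(gen \<Rightarrow> dic) \<Rightarrow> letter \<Rightarrow> dic" where
  "dic_letter \<gamma> l = (if snd l then dic_inv (\<gamma> (fst l)) else \<gamma> (fst l))"

fun dic_word :: "(gen \<Rightarrow> dic) \<Rightarrow> letter list \<Rightarrow> dic" where
  "dic_word \<gamma> [] = dic_one"
| "dic_word \<gamma> (l # w) = dic_mult (dic_letter \<gamma> l) (dic_word \<gamma> w)"

lemma dic_word_append: "dic_word \<gamma> (u @ w) = dic_mult (dic_word \<gamma> u) (dic_word \<gamma> w)"
  by (induction u) (simp_all add: dic_mult_assoc)

lemma dic_word_inv_word: "dic_word \<gamma> (inv_word w) = dic_inv (dic_word \<gamma> w)"
  by (induction w)
     (simp_all add: inv_word_def dic_word_append dic_letter_def inv_letter_def dic_inv_mult)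

lemma dic_letter_inv_letter: "dic_letter \<gamma> (inv_letter l) = dic_inv (dic_letter \<gamma> l)"
  by (simp add: dic_letter_def inv_letter_def)

lemma dic_word_free_red: "dic_word \<gamma> (free_red w) = dic_word \<gamma> w"
proof (induction w)
  case (Cons l w)
  show ?case
  proof (cases "free_red w")
    case (Cons l' w')
    with Cons.IH have w: "dic_word \<gamma> w = dic_mult (dic_letter \<gamma> l') (dic_word \<gamma> w')"
      by simp
    show ?thesis
    proof (cases "l' = inv_letter l")
      case True
      with Cons w show ?thesis
        by (simp add: dic_letter_inv_letter dic_mult_assoc[symmetric])
    qed (use Cons w in simp)
  qed (use Cons.IH in simp)
qed simp

lemma dic_word_subst: "dic_word \<gamma> (subst f w) = dic_word (\<lambda>g. dic_word \<gamma> (f g)) w"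
  by (induction f w rule: subst.induct) (simp_all add: dic_word_append dic_word_inv_word dic_letter_def)

text \<open>The endomorphism with \<open>t \<mapsto> (-1)^s t^k\<close> and \<open>q \<mapsto> (-1)^s' t^k' q\<close>.\<close>
fun dic_endo :: "bool \<times> int \<Rightarrow> bool \<times> int \<Rightarrow> dic \<Rightarrow> dic" where
  "dic_endo (s, k) (s', k') (p, n, e) =
     (p \<noteq> ((s \<and> odd n) \<noteq> (e \<and> s')), k * n + (if e then k' else 0), e)"

lemma dic_endo_mult: "dic_endo U V (dic_mult x y) = dic_mult (dic_endo U V x) (dic_endo U V y)"
  by (cases U; cases V; cases x; cases y) (auto simp: algebra_simps)

lemma dic_endo_inv: "dic_endo U V (dic_inv x) = dic_inv (dic_endo U V x)"
  by (cases U; cases V; cases x) (auto simp: algebra_simps)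

lemma dic_endo_one: "dic_endo U V dic_one = dic_one"
  by (cases U; cases V) (simp add: dic_one_def)

lemma dic_word_dic_endo:
  assumes "\<And>g. \<gamma>' g = dic_endo U V (\<gamma> g)"
  shows "dic_word \<gamma>' w = dic_endo U V (dic_word \<gamma> w)"
  by (induction w) (simp_all add: assms dic_endo_one dic_endo_mult dic_endo_inv dic_letter_def)

lemma dic_endo_twice:
  assumes "k = 1 \<or> k = -1"
  shows "dic_endo (s, k) (s', k') (dic_endo (s, k) (s', k') x)
           = dic_endo (False, 1) (s \<and> odd k', k * k' + k') x"
proof -
  obtain p n e where x: "x = (p, n, e)" by (cases x)
  from assms have "k * k = 1" and "odd (k * n + m) \<longleftrightarrow> odd (n + m)" for m by auto
  then show ?thesis by (auto simp: x algebra_simps)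
qed

text \<open>The character onto \<open>\<int>/4\<close> with \<open>t \<mapsto> 0\<close> and \<open>q \<mapsto> 1\<close>, hence \<open>-1 = q^2 \<mapsto> 2\<close>.\<close>
fun dic_mod4 :: "dic \<Rightarrow> int" where
  "dic_mod4 (s, n, e) = 2 * of_bool s + of_bool e"

lemma dic_mod4_mult: "dic_mod4 (dic_mult x y) mod 4 = (dic_mod4 x + dic_mod4 y) mod 4"
  by (cases x; cases y) auto

lemma dic_mod4_inv: "dic_mod4 (dic_inv x) mod 4 = - dic_mod4 x mod 4"
  by (cases x) auto

lemma dic_mod4_cases:
  assumes "dic_mod4 x mod 4 = c mod 4"
  obtains n where "x = (2 \<le> c mod 4, n, odd c)"
proof -
  obtain s n e where x: "x = (s, n, e)" by (cases x)
  with assms have "s = (2 \<le> c mod 4)" "e = odd c"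
    by (cases s; cases e; simp; presburger)+
  with x that show ?thesis by blast
qed

lemma exp_sum_Nil [simp]: "exp_sum g [] = 0"
  by (simp add: exp_sum_def)

lemma exp_sum_Cons [simp]:
  "exp_sum g (l # w) = (if fst l = g then if snd l then -1 else 1 else 0) + exp_sum g w"
  by (simp add: exp_sum_def)

lemma dic_mod4_dic_word:
  "dic_mod4 (dic_word \<gamma> w) mod 4 =
     (exp_sum Ga w * dic_mod4 (\<gamma> Ga) + exp_sum Gb w * dic_mod4 (\<gamma> Gb)) mod 4"
proof (induction w)
  case (Cons l w)
  have letter: "dic_mod4 (dic_letter \<gamma> l) mod 4 =
      ((if snd l then -1 else 1) * dic_mod4 (\<gamma> (fst l))) mod 4"
    by (simp add: dic_letter_def dic_mod4_inv)
  have "dic_mod4 (dic_word \<gamma> (l # w)) mod 4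
      = (dic_mod4 (dic_letter \<gamma> l) mod 4 + dic_mod4 (dic_word \<gamma> w) mod 4) mod 4"
    by (simp add: dic_mod4_mult mod_add_eq)
  also have "\<dots> = (exp_sum Ga (l # w) * dic_mod4 (\<gamma> Ga) + exp_sum Gb (l # w) * dic_mod4 (\<gamma> Gb)) mod 4"
    unfolding letter Cons.IH mod_add_eq by (cases l; cases "fst l") (simp_all add: algebra_simps)
  finally show ?case .
qed (simp add: dic_one_def)

lemma dic_word_shape_mod4:
  "\<exists>k. dic_word \<gamma> w = (2 \<le> (exp_sum Ga w * dic_mod4 (\<gamma> Ga) + exp_sum Gb w * dic_mod4 (\<gamma> Gb)) mod 4, k,
                          odd (exp_sum Ga w * dic_mod4 (\<gamma> Ga) + exp_sum Gb w * dic_mod4 (\<gamma> Gb)))"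
  using dic_mod4_cases[OF dic_mod4_dic_word] by metis

definition induces_dic_endo :: "(gen \<Rightarrow> dic) \<Rightarrow> endo \<Rightarrow> bool \<times> int \<Rightarrow> bool \<times> int \<Rightarrow> bool" where
  "induces_dic_endo \<gamma> \<phi> U V \<longleftrightarrow> (\<forall>g. dic_word \<gamma> (\<phi> g) = dic_endo U V (\<gamma> g))"

lemma dic_word_subst_induced:
  assumes "induces_dic_endo \<gamma> \<phi> U V"
  shows "dic_word \<gamma> (subst \<phi> w) = dic_endo U V (dic_word \<gamma> w)"
  unfolding dic_word_subst using assms by (intro dic_word_dic_endo) (simp add: induces_dic_endo_def)

lemma induces_dic_endo_comp:
  assumes "induces_dic_endo \<gamma> \<phi> (s, k) V" and "k = 1 \<or> k = -1"
  obtains V' where "induces_dic_endo \<gamma> (endo_comp \<phi> \<phi>) (False, 1) V'"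
proof -
  obtain s' k' where V: "V = (s', k')" by (cases V)
  have "dic_word \<gamma> (subst \<phi> (\<phi> g)) = dic_endo (s, k) V (dic_endo (s, k) V (\<gamma> g))" for g
    using assms(1) by (simp add: dic_word_subst_induced) (simp add: induces_dic_endo_def)
  then have "induces_dic_endo \<gamma> (endo_comp \<phi> \<phi>) (False, 1) (s \<and> odd k', k * k' + k')"
    using assms(2) by (simp add: induces_dic_endo_def endo_comp_def dic_endo_twice V)
  with that show ?thesis .
qed

lemma dic_word_subst_aut:
  assumes "is_aut \<phi>"
  obtains \<psi> where "\<And>w. dic_word \<gamma> (subst \<phi> (subst \<psi> w)) = dic_word \<gamma> w"
proof -
  obtain \<psi> where \<psi>: "\<And>g. free_red (subst \<phi> (\<psi> g)) = [(g, False)]"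
    using assms unfolding is_aut_def by blast
  have "dic_word \<gamma> (subst \<phi> (\<psi> g)) = \<gamma> g" for g
    using dic_word_free_red[of \<gamma> "subst \<phi> (\<psi> g)"] by (simp add: \<psi> dic_letter_def)
  then have "dic_word \<gamma> (subst \<phi> (subst \<psi> w)) = dic_word \<gamma> w" for w
    by (simp add: dic_word_subst)
  with that show ?thesis by blast
qed

lemma induces_dic_endo_unit:
  assumes "is_aut \<phi>" and "induces_dic_endo \<gamma> \<phi> (s, k) V" and "dic_word \<gamma> W = dic_t"
  shows "k = 1 \<or> k = -1"
proof -
  obtain \<psi> where \<psi>: "dic_word \<gamma> (subst \<phi> (subst \<psi> W)) = dic_word \<gamma> W"
    using dic_word_subst_aut[OF assms(1)] by blast
  obtain p n e where u: "dic_word \<gamma> (subst \<psi> W) = (p, n, e)"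
    by (cases "dic_word \<gamma> (subst \<psi> W)")
  obtain s' k' where V: "V = (s', k')" by (cases V)
  from \<psi> assms(3) have "dic_endo (s, k) (s', k') (p, n, e) = dic_t"
    by (simp add: dic_word_subst_induced[OF assms(2)] u V)
  then have "k * n = 1" by (simp add: dic_t_def split: if_splits)
  then show ?thesis by (auto simp: zmult_eq_1_iff)
qed

definition signed :: "bool \<Rightarrow> 'a::ring_1^'n^'n \<Rightarrow> 'a^'n^'n" where
  "signed s M = (if s then - M else M)"

lemma signed_mult: "signed s A ** signed s' B = signed (s \<noteq> s') (A ** B)"
  by (simp add: signed_def matrix_mul_neg_left matrix_mul_neg_right)

lemma signed_signed: "signed s (signed s' M) = signed (s \<noteq> s') M"
  by (simp add: signed_def)

lemma trace_signed: "trace (signed s M) = (if s then - trace M else trace M)"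
  by (simp add: signed_def trace_neg)

text \<open>Two matrices with \<open>Q\<^sup>2 = (PQ)\<^sup>2 = -1\<close> satisfy \<open>QPQ\<^sup>-\<^sup>1 = P\<^sup>-\<^sup>1\<close> and so define a
  representation of the dicyclic group with \<open>t \<mapsto> P\<close> and \<open>q \<mapsto> Q\<close>.\<close>
locale dicyclic_pair =
  fixes P Q :: mat2
  assumes det_P: "det P = 1" and det_Q: "det Q = 1"
    and trace_Q: "trace Q = 0" and trace_PQ: "trace (P ** Q) = 0"
begin

lemma Q_square: "Q ** Q = - mat 1"
  using mat2_square_eq_neg_one_iff det_Q trace_Q by blast

lemma PQ_square: "(P ** Q) ** (P ** Q) = - mat 1"
  using mat2_square_eq_neg_one_iff[of "P ** Q"] det_P det_Q trace_PQ by (simp add: det_mul)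

lemma P_inverse: "matrix_inv P = - (Q ** P ** Q)"
proof (rule matrix_inv_eqI)
  have "P ** - (Q ** P ** Q) = - ((P ** Q) ** (P ** Q))"
    by (simp add: matrix_mul_neg_right matrix_mul_assoc)
  then show "P ** - (Q ** P ** Q) = mat 1"
    by (simp add: PQ_square)
qed

lemma P_mult_inv: "P ** matrix_inv P = mat 1" "matrix_inv P ** P = mat 1"
proof -
  show "P ** matrix_inv P = mat 1"
    using P_inverse PQ_square by (simp add: matrix_mul_neg_right matrix_mul_assoc)
  then show "matrix_inv P ** P = mat 1"
    by (rule matrix_left_right_inverse1)
qed

lemma det_P_inv: "det (matrix_inv P) = 1"
  using det_mul[of P "matrix_inv P"] by (simp add: P_mult_inv det_P)

lemma Q_P: "Q ** P = matrix_inv P ** Q"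
proof -
  have "matrix_inv P ** Q = - (Q ** P ** (Q ** Q))"
    by (simp add: P_inverse matrix_mul_neg_left matrix_mul_assoc)
  then show ?thesis
    by (simp add: Q_square matrix_mul_neg_right)
qed

lemma Q_P_inv: "Q ** matrix_inv P = P ** Q"
proof -
  have "Q ** matrix_inv P = - ((Q ** Q) ** P ** Q)"
    by (simp add: P_inverse matrix_mul_neg_right matrix_mul_assoc)
  then show ?thesis
    by (simp add: Q_square matrix_mul_neg_left)
qed

definition P_pow :: "int \<Rightarrow> mat2" where
  "P_pow n = (if 0 \<le> n then matpow P (nat n) else matpow (matrix_inv P) (nat (- n)))"

lemma P_pow_0: "P_pow 0 = mat 1"
  by (simp add: P_pow_def)


lemma P_pow_succ: "P_pow (n + 1) = P_pow n ** P"
proof (cases "0 \<le> n")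
  case True
  then have "nat (n + 1) = Suc (nat n)" by simp
  with True show ?thesis by (simp add: P_pow_def flip: matpow_Suc_right)
next
  case False
  define j where "j = nat (- (n + 1))"
  with False have "nat (- n) = Suc j" by simp
  with False have "P_pow n = matpow (matrix_inv P) j ** matrix_inv P"
    by (simp add: P_pow_def flip: matpow_Suc_right)
  moreover from False have "P_pow (n + 1) = matpow (matrix_inv P) j"
    by (cases "n + 1 = 0") (simp_all add: P_pow_def j_def)
  ultimately show ?thesis
    by (simp add: P_mult_inv flip: matrix_mul_assoc)
qed

lemma P_pow_pred: "P_pow (n - 1) = P_pow n ** matrix_inv P"
  using P_pow_succ[of "n - 1"] by (simp add: P_mult_inv flip: matrix_mul_assoc)

lemma P_pow_add: "P_pow (m + n) = P_pow m ** P_pow n"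
proof (induction n rule: int_induct[where k = 0])
  case (step1 n)
  then show ?case using P_pow_succ[of "m + n"] P_pow_succ[of n] by (simp add: matrix_mul_assoc add.assoc)
next
  case (step2 n)
  then show ?case using P_pow_pred[of "m + n"] P_pow_pred[of n] by (simp add: matrix_mul_assoc add_diff_eq)
qed (simp add: P_pow_0)

lemma Q_mult_P_pow: "Q ** P_pow n = P_pow (- n) ** Q"
  using matpow_commute[OF Q_P] matpow_commute[OF Q_P_inv] by (simp add: P_pow_def)

lemma det_P_pow: "det (P_pow n) = 1"
  by (simp add: P_pow_def det_matpow det_P det_P_inv)

lemma trace_P_pow_uminus: "trace (P_pow (- n)) = trace (P_pow n)"
proof -
  have "P_pow (- n) = - (Q ** P_pow n ** Q)"
    using Q_mult_P_pow[of n] Q_square by (simp add: matrix_mul_neg_right flip: matrix_mul_assoc)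
  then have "trace (P_pow (- n)) = - trace (P_pow n ** (Q ** Q))"
    by (metis trace_neg trace_mul_sym matrix_mul_assoc)
  then show ?thesis using Q_square by (simp add: matrix_mul_neg_right trace_neg)
qed

lemma trace_P_pow_mult_Q: "trace (P_pow n ** Q) = 0"
proof -
  have "(P_pow n ** Q) ** (P_pow n ** Q) = P_pow n ** (Q ** P_pow n) ** Q"
    by (simp add: matrix_mul_assoc)
  also have "\<dots> = (P_pow n ** P_pow (- n)) ** (Q ** Q)"
    by (simp add: Q_mult_P_pow matrix_mul_assoc)
  also have "\<dots> = - mat 1"
    using Q_square by (simp add: P_pow_0 flip: P_pow_add)
  finally show ?thesis
    using mat2_square_eq_neg_one_iff[of "P_pow n ** Q"] by (simp add: det_mul det_P_pow det_Q)
qed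

definition Q_pow :: "bool \<Rightarrow> mat2" where
  "Q_pow e = (if e then Q else mat 1)"

lemma P_pow_Q_pow_mult:
  "(P_pow m ** Q_pow e) ** (P_pow k ** Q_pow f)
     = signed (e \<and> f) (P_pow (m + (if e then - k else k)) ** Q_pow (e \<noteq> f))"
proof -
  have "Q_pow e ** P_pow k = P_pow (if e then - k else k) ** Q_pow e"
    by (simp add: Q_pow_def Q_mult_P_pow)
  then have "(P_pow m ** Q_pow e) ** (P_pow k ** Q_pow f)
      = P_pow m ** (P_pow (if e then - k else k) ** Q_pow e) ** Q_pow f"
    by (metis matrix_mul_assoc)
  then have "(P_pow m ** Q_pow e) ** (P_pow k ** Q_pow f)
      = P_pow (m + (if e then - k else k)) ** (Q_pow e ** Q_pow f)"
    by (simp add: P_pow_add matrix_mul_assoc)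
  moreover have "Q_pow e ** Q_pow f = signed (e \<and> f) (Q_pow (e \<noteq> f))"
    by (simp add: Q_pow_def signed_def Q_square)
  ultimately show ?thesis
    by (simp add: signed_def matrix_mul_neg_right)
qed

fun dic_rep :: "dic \<Rightarrow> mat2" where
  "dic_rep (s, n, e) = signed s (P_pow n ** Q_pow e)"

lemma dic_rep_mult: "dic_rep (dic_mult x y) = dic_rep x ** dic_rep y"
proof -
  obtain s m e s' k f where "x = (s, m, e)" "y = (s', k, f)"
    by (cases x; cases y)
  then show ?thesis
    by (cases s; cases s'; cases e; cases f) (simp_all add: signed_mult P_pow_Q_pow_mult signed_signed)
qed

lemma dic_rep_one: "dic_rep dic_one = mat 1"
  by (simp add: dic_one_def signed_def P_pow_0 Q_pow_def)

lemma dic_rep_inv: "matrix_inv (dic_rep x) = dic_rep (dic_inv x)"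
  by (rule matrix_inv_eqI) (simp add: dic_rep_one flip: dic_rep_mult)

lemma eval_word_dic_rep: "eval_word (dic_rep \<circ> \<gamma>) w = dic_rep (dic_word \<gamma> w)"
  by (induction "dic_rep \<circ> \<gamma>" w rule: eval_word.induct)
     (simp_all add: dic_rep_one dic_rep_mult dic_rep_inv dic_letter_def)

lemma trace_dic_rep_endo:
  assumes "k = 1 \<or> k = -1"
  shows "trace (dic_rep (dic_endo (False, k) V x)) = trace (dic_rep x)"
  using assms trace_P_pow_uminus by (cases V; cases x) (auto simp: trace_signed Q_pow_def trace_P_pow_mult_Q)

lemma trace_eval_subst_induced:
  assumes "induces_dic_endo \<gamma> \<phi> (False, k) V" and "k = 1 \<or> k = -1"
  shows "trace (eval_word (dic_rep \<circ> \<gamma>) (subst \<phi> w)) = trace (eval_word (dic_rep \<circ> \<gamma>) w)"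
  using assms by (simp add: eval_word_dic_rep dic_word_subst_induced trace_dic_rep_endo)

lemma trace_eval_subst_induced_flip:
  assumes "induces_dic_endo \<gamma> \<phi> (True, k) V" and "k = 1 \<or> k = -1" and "dic_word \<gamma> W = dic_t"
  shows "trace (eval_word (dic_rep \<circ> \<gamma>) (subst \<phi> W)) = - trace (eval_word (dic_rep \<circ> \<gamma>) W)"
  using assms trace_P_pow_uminus[of 1]
  by (cases V) (auto simp: eval_word_dic_rep dic_word_subst_induced dic_t_def trace_signed Q_pow_def)

lemma dic_rep_generators:
  "dic_rep dic_t = P" "dic_rep dic_q = Q" "dic_rep (True, -1, True) = - (matrix_inv P ** Q)"
  by (simp_all add: dic_t_def dic_q_def signed_def P_pow_def Q_pow_def)

end

definition factors_through_dic ::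
    "(complex \<times> complex \<times> complex) set \<Rightarrow> (gen \<Rightarrow> dic) \<Rightarrow> bool" where
  "factors_through_dic L \<gamma> \<longleftrightarrow> (\<forall>\<rho>. is_SL2_rep \<rho> \<longrightarrow> char_coords \<rho> \<in> L \<longrightarrow>
     (\<exists>P Q. dicyclic_pair P Q \<and> \<rho> = dicyclic_pair.dic_rep P Q \<circ> \<gamma>))"

lemma axis_subset_fixed_chars:
  fixes L :: "(complex \<times> complex \<times> complex) set"
  assumes induced: "induces_dic_endo \<gamma> \<phi> (False, k) V" and unit: "k = 1 \<or> k = -1"
    and factor: "factors_through_dic L \<gamma>"
    and realized: "L \<subseteq> {char_coords \<rho> | \<rho>. is_SL2_rep \<rho>}"
  shows "L \<subseteq> fixed_chars \<phi>"
proof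
  fix pt assume "pt \<in> L"
  with realized obtain \<rho> where \<rho>: "is_SL2_rep \<rho>" "char_coords \<rho> = pt" by blast
  with factor \<open>pt \<in> L\<close> obtain P Q where "dicyclic_pair P Q" "\<rho> = dicyclic_pair.dic_rep P Q \<circ> \<gamma>"
    unfolding factors_through_dic_def by blast
  then have "trace (eval_word \<rho> (subst \<phi> w)) = trace (eval_word \<rho> w)" for w
    using dicyclic_pair.trace_eval_subst_induced[OF _ induced unit] by blast
  with \<rho> show "pt \<in> fixed_chars \<phi>"
    unfolding fixed_chars_def by blast
qed

lemma axis_not_subset_fixed_chars:
  fixes L :: "(complex \<times> complex \<times> complex) set"
  assumes induced: "induces_dic_endo \<gamma> \<phi> (True, k) V" and unit: "k = 1 \<or> k = -1"
    and W: "dic_word \<gamma> W = dic_t"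
    and factor: "factors_through_dic L \<gamma>"
    and witness: "pt \<in> L" "\<And>\<rho>. char_coords \<rho> = pt \<Longrightarrow> trace (eval_word \<rho> W) \<noteq> 0"
  shows "\<not> L \<subseteq> fixed_chars \<phi>"
proof
  assume "L \<subseteq> fixed_chars \<phi>"
  with witness(1) obtain \<rho> where \<rho>: "is_SL2_rep \<rho>" "char_coords \<rho> = pt"
    and fixed: "trace (eval_word \<rho> (subst \<phi> W)) = trace (eval_word \<rho> W)"
    unfolding fixed_chars_def by blast
  from factor \<rho> witness(1) obtain P Q where "dicyclic_pair P Q" "\<rho> = dicyclic_pair.dic_rep P Q \<circ> \<gamma>"
    unfolding factors_through_dic_def by blast
  then have "trace (eval_word \<rho> (subst \<phi> W)) = - trace (eval_word \<rho> W)"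
    using dicyclic_pair.trace_eval_subst_induced_flip[OF _ induced unit W] by blast
  with fixed witness(2)[OF \<rho>(2)] show False by simp
qed

lemma axis_fixed_chars_iff:
  fixes L :: "(complex \<times> complex \<times> complex) set"
  assumes aut: "is_aut \<phi>" and induced: "induces_dic_endo \<gamma> \<phi> (s, k) V"
    and W: "dic_word \<gamma> W = dic_t"
    and factor: "factors_through_dic L \<gamma>"
    and realized: "L \<subseteq> {char_coords \<rho> | \<rho>. is_SL2_rep \<rho>}"
    and witness: "pt \<in> L" "\<And>\<rho>. char_coords \<rho> = pt \<Longrightarrow> trace (eval_word \<rho> W) \<noteq> 0"
  shows "L \<subseteq> fixed_chars \<phi> \<longleftrightarrow> \<not> s"
    and "L \<subseteq> fixed_chars (endo_comp \<phi> \<phi>)"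
proof -
  have unit: "k = 1 \<or> k = -1"
    by (rule induces_dic_endo_unit[OF aut induced W])
  show "L \<subseteq> fixed_chars \<phi> \<longleftrightarrow> \<not> s"
    using axis_subset_fixed_chars[OF _ unit factor realized]
      axis_not_subset_fixed_chars[OF _ unit W factor witness] induced
    by (cases s) auto
  obtain V' where "induces_dic_endo \<gamma> (endo_comp \<phi> \<phi>) (False, 1) V'"
    using induces_dic_endo_comp[OF induced unit] .
  then show "L \<subseteq> fixed_chars (endo_comp \<phi> \<phi>)"
    using axis_subset_fixed_chars[OF _ _ factor realized] by blast
qed

lemma axis_subset_SL2_chars: "axis i \<subseteq> {char_coords \<rho> | \<rho>. is_SL2_rep \<rho>}"
proof
  fix pt assume pt: "pt \<in> axis i"
  define A :: "complex \<Rightarrow> mat2" where "A x = vector [vector [x, 1], vector [-1, 0]]" for x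
  define B :: mat2 where "B = vector [vector [0, \<i>], vector [\<i>, 0]]"
  define C :: "complex \<Rightarrow> mat2" where "C z = vector [vector [\<i>, 0], vector [z, -\<i>]]" for z
  define J :: mat2 where "J = vector [vector [0, 1], vector [-1, 0]]"
  define rep :: "mat2 \<Rightarrow> mat2 \<Rightarrow> gen \<Rightarrow> mat2" where "rep M N g = (case g of Ga \<Rightarrow> M | Gb \<Rightarrow> N)" for M N g
  have "is_SL2_rep (rep (A x) B)" "is_SL2_rep (rep B (A x))" "is_SL2_rep (rep J (C x))" for x
    by (simp_all add: is_SL2_rep_def rep_def A_def B_def C_def J_def det_2 split: gen.split)
  moreover have "char_coords (rep (A x) B) = (x, 0, 0)" "char_coords (rep B (A x)) = (0, x, 0)"
    "char_coords (rep J (C x)) = (0, 0, x)" for x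
    by (simp_all add: char_coords_def rep_def A_def B_def C_def J_def trace_mat2 mat2_mult_nth)
  moreover from pt consider x where "pt = (x, 0, 0)" | x where "pt = (0, x, 0)" | x where "pt = (0, 0, x)"
    unfolding axis_def by (auto split: if_splits)
  ultimately show "pt \<in> {char_coords \<rho> | \<rho>. is_SL2_rep \<rho>}"
    by cases (metis (mono_tags, lifting) mem_Collect_eq)+
qed

text \<open>The traceless pairs on \<open>L\<^sub>1\<close>, \<open>L\<^sub>2\<close>, \<open>L\<^sub>3\<close> are \<open>(b, ab)\<close>, \<open>(a, ab)\<close>, \<open>(a, b)\<close>; the quotient
  map for \<open>L\<^sub>i\<close> sends the element whose trace is the free coordinate (\<open>a\<close>, \<open>b\<close>, \<open>ab\<close>) to \<open>t\<close>.\<close>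
definition axis1_hom :: "gen \<Rightarrow> dic" where
  "axis1_hom g = (case g of Ga \<Rightarrow> dic_t | Gb \<Rightarrow> dic_q)"

definition axis2_hom :: "gen \<Rightarrow> dic" where
  "axis2_hom g = (case g of Ga \<Rightarrow> dic_q | Gb \<Rightarrow> dic_t)"

definition axis3_hom :: "gen \<Rightarrow> dic" where
  "axis3_hom g = (case g of Ga \<Rightarrow> dic_q | Gb \<Rightarrow> (True, -1, True))"

lemma axis1_factors_through_dic: "factors_through_dic (axis 1) axis1_hom"
  unfolding factors_through_dic_def
proof (intro allI impI)
  fix \<rho> assume hyps: "is_SL2_rep \<rho>" "char_coords \<rho> \<in> axis 1"
  have pair: "dicyclic_pair (\<rho> Ga) (\<rho> Gb)"
    using hyps by unfold_locales (auto simp: is_SL2_rep_def char_coords_def axis_def)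
  then have "\<rho> = dicyclic_pair.dic_rep (\<rho> Ga) (\<rho> Gb) \<circ> axis1_hom"
    by (auto simp: dicyclic_pair.dic_rep_generators axis1_hom_def split: gen.split)
  with pair show "\<exists>P Q. dicyclic_pair P Q \<and> \<rho> = dicyclic_pair.dic_rep P Q \<circ> axis1_hom" by blast
qed

lemma axis2_factors_through_dic: "factors_through_dic (axis 2) axis2_hom"
  unfolding factors_through_dic_def
proof (intro allI impI)
  fix \<rho> assume hyps: "is_SL2_rep \<rho>" "char_coords \<rho> \<in> axis 2"
  have pair: "dicyclic_pair (\<rho> Gb) (\<rho> Ga)"
    using hyps trace_mul_sym[of "\<rho> Ga" "\<rho> Gb"]
    by unfold_locales (auto simp: is_SL2_rep_def char_coords_def axis_def)
  then have "\<rho> = dicyclic_pair.dic_rep (\<rho> Gb) (\<rho> Ga) \<circ> axis2_hom"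
    by (auto simp: dicyclic_pair.dic_rep_generators axis2_hom_def split: gen.split)
  with pair show "\<exists>P Q. dicyclic_pair P Q \<and> \<rho> = dicyclic_pair.dic_rep P Q \<circ> axis2_hom" by blast
qed

lemma axis3_factors_through_dic: "factors_through_dic (axis 3) axis3_hom"
  unfolding factors_through_dic_def
proof (intro allI impI)
  fix \<rho> assume hyps: "is_SL2_rep \<rho>" "char_coords \<rho> \<in> axis 3"
  let ?A = "\<rho> Ga" and ?B = "\<rho> Gb"
  have det: "det ?A = 1" "det ?B = 1" and tr: "trace ?A = 0" "trace ?B = 0"
    using hyps by (auto simp: is_SL2_rep_def char_coords_def axis_def)
  then have sq: "?A ** ?A = - mat 1" "?B ** ?B = - mat 1"
    using mat2_square_eq_neg_one_iff by blast+
  have "trace ((?A ** ?B) ** ?A) = trace ((?A ** ?A) ** ?B)"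
    by (metis trace_mul_sym matrix_mul_assoc)
  with sq tr have pair: "dicyclic_pair (?A ** ?B) ?A"
    using det by unfold_locales (simp_all add: det_mul matrix_mul_neg_left trace_neg)
  have "?A ** ?B ** (?B ** ?A) = ?A ** (?B ** ?B) ** ?A"
    by (simp add: matrix_mul_assoc)
  then have "matrix_inv (?A ** ?B) = ?B ** ?A"
    using sq by (intro matrix_inv_eqI) (simp add: matrix_mul_neg_left matrix_mul_neg_right)
  then have "- (matrix_inv (?A ** ?B) ** ?A) = ?B"
    using sq by (simp add: matrix_mul_neg_right flip: matrix_mul_assoc)
  with pair have "\<rho> = dicyclic_pair.dic_rep (?A ** ?B) ?A \<circ> axis3_hom"
    by (auto simp: dicyclic_pair.dic_rep_generators axis3_hom_def split: gen.split)
  with pair show "\<exists>P Q. dicyclic_pair P Q \<and> \<rho> = dicyclic_pair.dic_rep P Q \<circ> axis3_hom" by blast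
qed

lemma axis1_hom_induces:
  assumes "even (ab21 \<phi>)" and "odd (ab22 \<phi>)"
  obtains k V where "induces_dic_endo axis1_hom \<phi> (ab21 \<phi> mod 4 = 2, k) V"
proof -
  obtain k where "dic_word axis1_hom (\<phi> Ga) = (2 \<le> ab21 \<phi> mod 4, k, odd (ab21 \<phi>))"
    using dic_word_shape_mod4[of axis1_hom "\<phi> Ga"]
    by (auto simp: axis1_hom_def dic_t_def dic_q_def ab21_def)
  moreover obtain k' where "dic_word axis1_hom (\<phi> Gb) = (2 \<le> ab22 \<phi> mod 4, k', odd (ab22 \<phi>))"
    using dic_word_shape_mod4[of axis1_hom "\<phi> Gb"]
    by (auto simp: axis1_hom_def dic_t_def dic_q_def ab22_def)
  moreover have "2 \<le> ab21 \<phi> mod 4 \<longleftrightarrow> ab21 \<phi> mod 4 = 2"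
    using assms(1) by presburger
  ultimately have "induces_dic_endo axis1_hom \<phi> (ab21 \<phi> mod 4 = 2, k) (2 \<le> ab22 \<phi> mod 4, k')"
    using assms by (simp add: induces_dic_endo_def axis1_hom_def dic_t_def dic_q_def split: gen.split)
  with that show ?thesis .
qed

lemma axis2_hom_induces:
  assumes "even (ab12 \<phi>)" and "odd (ab11 \<phi>)"
  obtains k V where "induces_dic_endo axis2_hom \<phi> (ab12 \<phi> mod 4 = 2, k) V"
proof -
  obtain k where "dic_word axis2_hom (\<phi> Gb) = (2 \<le> ab12 \<phi> mod 4, k, odd (ab12 \<phi>))"
    using dic_word_shape_mod4[of axis2_hom "\<phi> Gb"]
    by (auto simp: axis2_hom_def dic_t_def dic_q_def ab12_def)
  moreover obtain k' where "dic_word axis2_hom (\<phi> Ga) = (2 \<le> ab11 \<phi> mod 4, k', odd (ab11 \<phi>))"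
    using dic_word_shape_mod4[of axis2_hom "\<phi> Ga"]
    by (auto simp: axis2_hom_def dic_t_def dic_q_def ab11_def)
  moreover have "2 \<le> ab12 \<phi> mod 4 \<longleftrightarrow> ab12 \<phi> mod 4 = 2"
    using assms(1) by presburger
  ultimately have "induces_dic_endo axis2_hom \<phi> (ab12 \<phi> mod 4 = 2, k) (2 \<le> ab11 \<phi> mod 4, k')"
    using assms by (simp add: induces_dic_endo_def axis2_hom_def dic_t_def dic_q_def split: gen.split)
  with that show ?thesis .
qed

lemma axis3_sign_mod4:
  fixes p q r s :: int
  assumes "p * s - q * r = 1" and "even q" and "even r"
  shows "(2 \<le> (p + r * 3) mod 4 \<longleftrightarrow> 2 \<le> (q + s * 3) mod 4) \<longleftrightarrow> q mod 4 \<noteq> r mod 4"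
proof -
  obtain b c where q: "q = 2 * b" and r: "r = 2 * c"
    using assms(2,3) by (auto elim!: evenE)
  with assms(1) have "p * s = 2 * (2 * b * c) + 1" by simp
  then have "odd (p * s)" by simp
  then obtain a d where p: "p = 2 * a + 1" and s: "s = 2 * d + 1"
    by (auto elim!: oddE)
  from assms(1) have "a + d = 2 * (b * c - a * d)"
    unfolding p q r s by (simp add: algebra_simps)
  then have "even (a + d)" by simp
  moreover have "2 \<le> (p + r * 3) mod 4 \<longleftrightarrow> odd (a + c)"
    unfolding p r by presburger
  moreover have "2 \<le> (q + s * 3) mod 4 \<longleftrightarrow> even (b + d)"
    unfolding q s by presburger
  moreover have "q mod 4 \<noteq> r mod 4 \<longleftrightarrow> odd (b + c)"
    unfolding q r by presburger
  ultimately show ?thesis by auto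
qed

lemma axis3_hom_induces:
  assumes "ab_det \<phi> = 1" and "even (ab12 \<phi>)" and "even (ab21 \<phi>)"
  obtains k V where "induces_dic_endo axis3_hom \<phi> (ab12 \<phi> mod 4 \<noteq> ab21 \<phi> mod 4, k) V"
proof -
  have "ab11 \<phi> * ab22 \<phi> = 1 + ab12 \<phi> * ab21 \<phi>"
    using assms(1) by (simp add: ab_det_def algebra_simps)
  with assms(2) have "odd (ab11 \<phi> * ab22 \<phi>)"
    by simp
  then have "odd (ab11 \<phi>)" "odd (ab22 \<phi>)"
    by simp_all
  moreover obtain k where
    "dic_word axis3_hom (\<phi> Ga) = (2 \<le> (ab11 \<phi> + ab21 \<phi> * 3) mod 4, k, odd (ab11 \<phi> + ab21 \<phi> * 3))"
    using dic_word_shape_mod4[of axis3_hom "\<phi> Ga"]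
    by (auto simp: axis3_hom_def dic_q_def ab11_def ab21_def)
  moreover obtain k' where
    "dic_word axis3_hom (\<phi> Gb) = (2 \<le> (ab12 \<phi> + ab22 \<phi> * 3) mod 4, k', odd (ab12 \<phi> + ab22 \<phi> * 3))"
    using dic_word_shape_mod4[of axis3_hom "\<phi> Gb"]
    by (auto simp: axis3_hom_def dic_q_def ab12_def ab22_def)
  ultimately have "induces_dic_endo axis3_hom \<phi>
      (2 \<le> (ab11 \<phi> + ab21 \<phi> * 3) mod 4 \<longleftrightarrow> 2 \<le> (ab12 \<phi> + ab22 \<phi> * 3) mod 4, k - k')
      (2 \<le> (ab11 \<phi> + ab21 \<phi> * 3) mod 4, k)"
    using assms by (auto simp: induces_dic_endo_def axis3_hom_def dic_q_def split: gen.split)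
  with that show ?thesis
    using axis3_sign_mod4[of "ab11 \<phi>" "ab22 \<phi>" "ab12 \<phi>" "ab21 \<phi>"] assms by (simp add: ab_det_def)
qed

lemma axis1_fixed_chars:
  assumes "is_aut \<phi>" and "even (ab21 \<phi>)" and "odd (ab22 \<phi>)"
  shows "axis 1 \<subseteq> fixed_chars \<phi> \<longleftrightarrow> ab21 \<phi> mod 4 \<noteq> 2"
    and "axis 1 \<subseteq> fixed_chars (endo_comp \<phi> \<phi>)"
proof -
  obtain k V where "induces_dic_endo axis1_hom \<phi> (ab21 \<phi> mod 4 = 2, k) V"
    using axis1_hom_induces assms(2,3) by blast
  moreover have "dic_word axis1_hom [(Ga, False)] = dic_t"
    by (simp add: axis1_hom_def dic_letter_def dic_q_def dic_t_def)
  moreover have "(1, 0, 0) \<in> axis 1"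
    "\<And>\<rho>. char_coords \<rho> = (1, 0, 0) \<Longrightarrow> trace (eval_word \<rho> [(Ga, False)]) \<noteq> 0"
    by (auto simp: axis_def char_coords_def)
  ultimately show "axis 1 \<subseteq> fixed_chars \<phi> \<longleftrightarrow> ab21 \<phi> mod 4 \<noteq> 2"
    "axis 1 \<subseteq> fixed_chars (endo_comp \<phi> \<phi>)"
    using axis_fixed_chars_iff[OF assms(1) _ _ axis1_factors_through_dic axis_subset_SL2_chars] by blast+
qed

lemma axis2_fixed_chars:
  assumes "is_aut \<phi>" and "even (ab12 \<phi>)" and "odd (ab11 \<phi>)"
  shows "axis 2 \<subseteq> fixed_chars \<phi> \<longleftrightarrow> ab12 \<phi> mod 4 \<noteq> 2"
    and "axis 2 \<subseteq> fixed_chars (endo_comp \<phi> \<phi>)"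
proof -
  obtain k V where "induces_dic_endo axis2_hom \<phi> (ab12 \<phi> mod 4 = 2, k) V"
    using axis2_hom_induces assms(2,3) by blast
  moreover have "dic_word axis2_hom [(Gb, False)] = dic_t"
    by (simp add: axis2_hom_def dic_letter_def dic_q_def dic_t_def)
  moreover have "(0, 1, 0) \<in> axis 2"
    "\<And>\<rho>. char_coords \<rho> = (0, 1, 0) \<Longrightarrow> trace (eval_word \<rho> [(Gb, False)]) \<noteq> 0"
    by (auto simp: axis_def char_coords_def)
  ultimately show "axis 2 \<subseteq> fixed_chars \<phi> \<longleftrightarrow> ab12 \<phi> mod 4 \<noteq> 2"
    "axis 2 \<subseteq> fixed_chars (endo_comp \<phi> \<phi>)"
    using axis_fixed_chars_iff[OF assms(1) _ _ axis2_factors_through_dic axis_subset_SL2_chars] by blast+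
qed

lemma axis3_fixed_chars:
  assumes "is_aut \<phi>" and "ab_det \<phi> = 1" and "even (ab12 \<phi>)" and "even (ab21 \<phi>)"
  shows "axis 3 \<subseteq> fixed_chars \<phi> \<longleftrightarrow> ab12 \<phi> mod 4 = ab21 \<phi> mod 4"
    and "axis 3 \<subseteq> fixed_chars (endo_comp \<phi> \<phi>)"
proof -
  obtain k V where "induces_dic_endo axis3_hom \<phi> (ab12 \<phi> mod 4 \<noteq> ab21 \<phi> mod 4, k) V"
    using axis3_hom_induces assms(2-4) by blast
  moreover have "dic_word axis3_hom [(Ga, False), (Gb, False)] = dic_t"
    by (simp add: axis3_hom_def dic_letter_def dic_q_def dic_t_def)
  moreover have "(0, 0, 1) \<in> axis 3"
    "\<And>\<rho>. char_coords \<rho> = (0, 0, 1) \<Longrightarrow> trace (eval_word \<rho> [(Ga, False), (Gb, False)]) \<noteq> 0"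
    by (auto simp: axis_def char_coords_def)
  ultimately show "axis 3 \<subseteq> fixed_chars \<phi> \<longleftrightarrow> ab12 \<phi> mod 4 = ab21 \<phi> mod 4"
    "axis 3 \<subseteq> fixed_chars (endo_comp \<phi> \<phi>)"
    using axis_fixed_chars_iff[OF assms(1) _ _ axis3_factors_through_dic axis_subset_SL2_chars] by blast+
qed

theorem lemma3p3:
  fixes \<phi> :: endo
  assumes aut: "is_aut \<phi>"
    and orient: "ab_det \<phi> = 1"
    and hyperbolic: "\<bar>ab_trace \<phi>\<bar> > 2"
    and H1_mod2: "even (ab11 \<phi> - 1)" "even (ab12 \<phi>)" "even (ab21 \<phi>)" "even (ab22 \<phi> - 1)"
  shows "card {i \<in> {1, 2, 3::nat}. axis i \<subseteq> fixed_chars \<phi>} \<in> {1, 3}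
         \<and> (\<forall>i \<in> {1, 2, 3::nat}. axis i \<subseteq> fixed_chars (endo_comp \<phi> \<phi>))"
proof -
  have odd: "odd (ab11 \<phi>)" "odd (ab22 \<phi>)"
    using H1_mod2(1,4) by presburger+
  note L1 = axis1_fixed_chars[OF aut H1_mod2(3) odd(2)]
    and L2 = axis2_fixed_chars[OF aut H1_mod2(2) odd(1)]
    and L3 = axis3_fixed_chars[OF aut orient H1_mod2(2,3)]
  define fixed where "fixed i \<longleftrightarrow> axis i \<subseteq> fixed_chars \<phi>" for i :: nat
  have "{i \<in> {1, 2, 3}. fixed i}
      = (if ab21 \<phi> mod 4 \<noteq> 2 then {1} else {}) \<union> (if ab12 \<phi> mod 4 \<noteq> 2 then {2} else {})
        \<union> (if ab12 \<phi> mod 4 = ab21 \<phi> mod 4 then {3} else {})"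
    using L1(1) L2(1) L3(1) unfolding fixed_def by auto
  moreover have "ab12 \<phi> mod 4 = 0 \<or> ab12 \<phi> mod 4 = 2"
    using H1_mod2(2) by (elim evenE) presburger
  moreover have "ab21 \<phi> mod 4 = 0 \<or> ab21 \<phi> mod 4 = 2"
    using H1_mod2(3) by (elim evenE) presburger
  ultimately have "card {i \<in> {1, 2, 3}. fixed i} \<in> {1, 3}"
    by auto
  with L1(2) L2(2) L3(2) show ?thesis
    unfolding fixed_def by simp
qed

end
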